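(* Let $N\geq3$, let $m$ be a positive integer, and let $(M,g)$ be the $N$-dimensional Riemannian model with pole $o$ and metric $ds^2=dr^2+\psi^2(r)\,d\omega^2$ with $\psi(r)=r\,e^{r^{2m}}$. Then for all $u\in C_c^\infty(M\setminus\{o\})$, $$\int_M\Big(\frac{\partial u}{\partial r}\Big)^2dv_g\geq\frac{(N-2)^2}{4}\int_M\frac{u^2}{r^2}dv_g+m^2(N-1)^2\int_M r^{4m-2}u^2dv_g+m(N-1)(N-2+2m)\int_M r^{2m-2}u^2dv_g,$$ and the constant $\frac{(N-2)^2}{4}$ is sharp, i.e. the inequality fails for some such $u$ if $\frac{(N-2)^2}{4}$ is replaced by any larger constant.
   Context: $d\omega^2$ is the standard metric on $\mathbb{S}^{N-1}$, $r$ the geodesic distance from $o$, $\frac{\partial u}{\partial r}$ the radial derivative, $dv_g$ the Riemannian volume. *)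

theory Defs
  imports "HOL-Analysis.Analysis"
begin

text \<open>The model manifold with pole o is realised in global polar coordinates as
  R^N, o = 0, x = r*omega with r = norm x, omega in S^(N-1).  Away from o this
  chart is a diffeomorphism, so C_c^infinity(M minus o) = smooth functions on
  R^N minus 0 with compact support not containing 0.\<close>

coinductive smooth_on :: "'a::euclidean_space set \<Rightarrow> ('a \<Rightarrow> real) \<Rightarrow> bool" for S where
  "f differentiable_on S \<Longrightarrow> (\<forall>v. smooth_on S (\<lambda>x. frechet_derivative f (at x) v))
     \<Longrightarrow> smooth_on S f"

definition test_fn :: "('a::euclidean_space \<Rightarrow> real) \<Rightarrow> bool" where
  "test_fn u \<longleftrightarrow> smooth_on (- {0}) u \<and> compact (closure {x. u x \<noteq> 0})
      \<and> 0 \<notin> closure {x. u x \<noteq> 0}"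

definition psi :: "nat \<Rightarrow> real \<Rightarrow> real" where
  "psi m r = r * exp (r ^ (2 * m))"

text \<open>Riemannian volume dv_g = psi(r)^(N-1) dr d omega = (psi(r)/r)^(N-1) dx.\<close>
definition vol_density :: "nat \<Rightarrow> 'a::euclidean_space \<Rightarrow> real" where
  "vol_density m x = (psi m (norm x) / norm x) ^ (DIM('a) - 1)"

definition model_integral :: "nat \<Rightarrow> ('a::euclidean_space \<Rightarrow> real) \<Rightarrow> real" where
  "model_integral m f = (\<integral>x. f x * vol_density m x \<partial>lborel)"

definition radial_deriv :: "('a::euclidean_space \<Rightarrow> real) \<Rightarrow> 'a \<Rightarrow> real" where
  "radial_deriv u x = frechet_derivative u (at x) (x /\<^sub>R norm x)"

definition hardy_rhs :: "nat \<Rightarrow> real \<Rightarrow> ('a::euclidean_space \<Rightarrow> real) \<Rightarrow> real" where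
  "hardy_rhs m c u =
     c * model_integral m (\<lambda>x. (u x)\<^sup>2 / (norm x)\<^sup>2)
     + (real m)\<^sup>2 * (real DIM('a) - 1)\<^sup>2 * model_integral m (\<lambda>x. norm x ^ (4*m - 2) * (u x)\<^sup>2)
     + real m * (real DIM('a) - 1) * (real DIM('a) - 2 + 2 * real m)
         * model_integral m (\<lambda>x. norm x ^ (2*m - 2) * (u x)\<^sup>2)"

end

(*
  Let E(r) = exp((N-1) r^(2m)) = (psi(r)/r)^(N-1) be the density of dv_g in the
  polar chart and w(r) = ((N-2)/(2 r^2) + m(N-1) r^(2m-2)) E(r). The divergence of the vector
  field u^2 w(|x|) x integrates to zero, and adding it to the integrand of the difference of the
  two sides leaves (du/dr + ((N-2)/(2r) + m(N-1) r^(2m-1)) u)^2 E(r) >= 0.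

  The functions u_L(x) = |x|^(-(N-2)/2) G(ln|x| / L), with G a smooth bump supported
  in [-2,-1], live in the annulus exp(-2L) < |x| < exp(-L), where 1 <= E <= exp((N-1) exp(-L)).
  Their radial energy is at most ((N-2)^2/4 + o(1)) times their Euclidean Hardy integral as
  L -> oo, because the derivative of G only contributes O(1/L^2), while the remaining terms of
  the right-hand side are nonnegative.

  The only change of variables used is the dilation x -> t x: the divergence identity comes from
  differentiating  int F(t x) dx = t^(-N) int F(x) dx  at t = 1, and integrals of |x|^(-N) f(ln|x|)
  are invariant under translations of f.
*)

theory Submission
  imports Defs "HOL-Real_Asymp.Real_Asymp"
begin

section \<open>Smooth functions off the origin\<close>

lemma smooth_on_coinduct_invariant:
  assumes "open S" and "P f"
    and step: "\<And>g. P g \<Longrightarrow> g differentiable_on S \<and>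
        (\<forall>v. \<exists>g'. P g' \<and> (\<forall>x\<in>S. frechet_derivative g (at x) v = g' x))"
  shows "smooth_on S f"
proof -
  define X where "X = (\<lambda>f. \<exists>g. P g \<and> (\<forall>x\<in>S. f x = g x))"
  have "X f" using \<open>P f\<close> unfolding X_def by blast
  then show ?thesis
  proof (coinduction arbitrary: f rule: smooth_on.coinduct)
    case (smooth_on f)
    then obtain g where "P g" and eq: "\<forall>x\<in>S. f x = g x" unfolding X_def by blast
    have g_diff: "g differentiable_on S"
      and g_deriv: "\<forall>v. \<exists>g'. P g' \<and> (\<forall>x\<in>S. frechet_derivative g (at x) v = g' x)"
      using step[OF \<open>P g\<close>] by auto
    have f_deriv: "(f has_derivative frechet_derivative g (at x)) (at x)" if "x \<in> S" for x
    proof -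
      have "g differentiable at x"
        using g_diff \<open>open S\<close> that differentiable_on_eq_differentiable_at by blast
      then have "(g has_derivative frechet_derivative g (at x)) (at x)"
        using frechet_derivative_works by blast
      then show ?thesis
        by (rule has_derivative_transform_within_open[OF _ \<open>open S\<close> that]) (use eq in auto)
    qed
    have "f differentiable_on S"
      using f_deriv \<open>open S\<close> by (meson differentiableI differentiable_at_imp_differentiable_on)
    moreover have "X (\<lambda>x. frechet_derivative f (at x) v)" for v
    proof -
      obtain g' where "P g'" and g': "\<forall>x\<in>S. frechet_derivative g (at x) v = g' x"
        using g_deriv by blast
      moreover have "\<forall>x\<in>S. frechet_derivative f (at x) v = g' x"
        using f_deriv g' frechet_derivative_at by metis
      ultimately show ?thesis unfolding X_def by blast
    qed
    ultimately show ?case by blast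
  qed
qed

lemma smooth_onD:
  assumes "smooth_on S f"
  shows "f differentiable_on S" "\<And>v. smooth_on S (\<lambda>x. frechet_derivative f (at x) v)"
  using assms by (cases rule: smooth_on.cases, auto)+

definition flat_exp :: "nat \<Rightarrow> real \<Rightarrow> real" where
  "flat_exp n t = (if t > 0 then exp (-1/t) / t^n else 0)"

lemma flat_exp_pos: "t > 0 \<Longrightarrow> flat_exp n t > 0"
  by (simp add: flat_exp_def)

lemma flat_exp_eq_0: "t \<le> 0 \<Longrightarrow> flat_exp n t = 0"
  by (simp add: flat_exp_def)

lemma flat_exp_div_tendsto_0: "((\<lambda>h. flat_exp n h / h) \<longlongrightarrow> 0) (at (0::real))"
proof (rule filterlim_split_at)
  show "((\<lambda>h. flat_exp n h / h) \<longlongrightarrow> 0) (at_left 0)"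
    by (rule tendsto_eventually)
      (auto simp: flat_exp_def eventually_at_left_field intro!: exI[of _ "-1"])
  have "((\<lambda>s::real. s ^ Suc n / exp s) \<longlongrightarrow> 0) at_top"
    by (rule tendsto_power_div_exp_0)
  from filterlim_compose[OF this filterlim_inverse_at_top_right]
  have "((\<lambda>h. (1/h) ^ Suc n / exp (1/h)) \<longlongrightarrow> 0) (at_right (0::real))"
    by (simp add: inverse_eq_divide)
  then show "((\<lambda>h. flat_exp n h / h) \<longlongrightarrow> 0) (at_right 0)"
  proof (rule Lim_transform_eventually)
    show "\<forall>\<^sub>F h in at_right 0. (1/h) ^ Suc n / exp (1/h) = flat_exp n h / h"
      unfolding eventually_at_right_field
      by (rule exI[of _ 1]) (auto simp: flat_exp_def exp_minus field_simps power_divide)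
  qed
qed

lemma flat_exp_has_real_derivative:
  "(flat_exp n has_real_derivative flat_exp (n+2) t - real n * flat_exp (n+1) t) (at t)"
proof -
  consider "t > 0" | "t < 0" | "t = 0" by linarith
  then show ?thesis
  proof cases
    case 1
    have "((\<lambda>t. exp (-1/t) / t^n) has_real_derivative
        (exp (-1/t) * (1/t^2) * t^n - exp (-1/t) * (real n * t^(n-1))) / (t^n)^2) (at t)"
      using 1 by (auto intro!: derivative_eq_intros simp: power2_eq_square)
    moreover have "(exp (-1/t) * (1/t^2) * t^n - exp (-1/t) * (real n * t^(n-1))) / (t^n)^2
        = flat_exp (n+2) t - real n * flat_exp (n+1) t"
      using 1 by (cases n) (simp_all add: flat_exp_def field_simps power2_eq_square)
    ultimately show ?thesis
      by (rule_tac has_field_derivative_transform_within_open[where S="{0<..}"])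
        (use 1 in \<open>auto simp: flat_exp_def\<close>)
  next
    case 2
    have "(flat_exp n has_real_derivative 0) (at t)"
      by (rule has_field_derivative_transform_within_open[OF DERIV_const, where S="{..<0}"])
        (use 2 in \<open>auto simp: flat_exp_def\<close>)
    then show ?thesis using 2 by (simp add: flat_exp_def)
  next
    case 3
    have "(flat_exp n has_real_derivative 0) (at 0)"
      unfolding has_field_derivative_iff using flat_exp_div_tendsto_0[of n]
      by (simp add: flat_exp_def)
    then show ?thesis using 3 by (simp add: flat_exp_def)
  qed
qed

lemma continuous_on_flat_exp: "continuous_on A (flat_exp n)"
  using flat_exp_has_real_derivative DERIV_isCont continuous_at_imp_continuous_on by blast

text \<open>Closure under directional derivatives (\<open>elementary_fn_has_derivative\<close>) is exactly what
  the coinductive definition of \<open>smooth_on\<close> asks for.\<close>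

inductive elementary_fn :: "('a::euclidean_space \<Rightarrow> real) \<Rightarrow> bool" where
  elementary_const: "elementary_fn (\<lambda>x. c)"
| elementary_norm_powr: "elementary_fn (\<lambda>x. norm x powr p)"
| elementary_flat_exp: "elementary_fn (\<lambda>x. flat_exp n (\<alpha> + \<beta> * ln (norm x)))"
| elementary_inner: "elementary_fn (\<lambda>x. inner x w)"
| elementary_add: "elementary_fn f \<Longrightarrow> elementary_fn g \<Longrightarrow> elementary_fn (\<lambda>x. f x + g x)"
| elementary_mult: "elementary_fn f \<Longrightarrow> elementary_fn g \<Longrightarrow> elementary_fn (\<lambda>x. f x * g x)"

lemma has_derivative_norm_powr:
  fixes x :: "'a::euclidean_space"
  assumes "x \<noteq> 0"
  shows "((\<lambda>x. norm x powr p) has_derivative (\<lambda>h. p * (norm x powr (p-2) * inner x h))) (at x)"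
proof -
  have "((\<lambda>r. r powr p) has_real_derivative p * norm x powr (p - 1)) (at (norm x))"
    using assms by (intro has_real_derivative_powr) auto
  then have "((\<lambda>x. norm x powr p) has_derivative (\<lambda>h. (p * norm x powr (p - 1)) * (h \<bullet> sgn x))) (at x)"
    using has_derivative_compose[OF has_derivative_norm[OF assms]]
    by (simp add: has_field_derivative_def)
  moreover have "norm x powr (p - 1) = norm x powr (p - 2) * norm x"
    using powr_add[of "norm x" "p-2" 1] by simp
  ultimately show ?thesis
    using assms by (simp add: sgn_div_norm inner_commute field_simps)
qed

lemma has_derivative_ln_norm:
  fixes x :: "'a::euclidean_space"
  assumes "x \<noteq> 0"
  shows "((\<lambda>x. ln (norm x)) has_derivative (\<lambda>h. norm x powr (-2) * inner x h)) (at x)"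
proof -
  have "(ln has_real_derivative inverse (norm x)) (at (norm x))"
    using assms by (intro DERIV_ln) auto
  then have "((\<lambda>x. ln (norm x)) has_derivative (\<lambda>h. inverse (norm x) * (h \<bullet> sgn x))) (at x)"
    using has_derivative_compose[OF has_derivative_norm[OF assms]]
    by (simp add: has_field_derivative_def)
  then show ?thesis
    using assms by (simp add: sgn_div_norm inner_commute field_simps powr_minus power2_eq_square)
qed

lemma elementary_fn_has_derivative:
  "elementary_fn f \<Longrightarrow>
    \<exists>Df. (\<forall>x. x \<noteq> 0 \<longrightarrow> (f has_derivative Df x) (at x)) \<and> (\<forall>v. elementary_fn (\<lambda>x. Df x v))"
proof (induction rule: elementary_fn.induct)
  case (elementary_const c)
  show ?case by (rule exI[of _ "\<lambda>x v. 0"]) (auto intro: elementary_fn.intros)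
next
  case (elementary_norm_powr p)
  show ?case
    by (rule exI[of _ "\<lambda>x v. p * (norm x powr (p-2) * inner x v)"])
      (auto intro!: has_derivative_norm_powr elementary_fn.intros)
next
  case (elementary_flat_exp n \<alpha> \<beta>)
  define Df where "Df x v = (flat_exp (n+2) (\<alpha> + \<beta> * ln (norm x))
      + (- real n) * flat_exp (n+1) (\<alpha> + \<beta> * ln (norm x))) * (\<beta> * (norm x powr (-2) * inner x v))"
    for x v :: 'a
  have "((\<lambda>x. flat_exp n (\<alpha> + \<beta> * ln (norm x))) has_derivative Df x) (at x)" if "x \<noteq> 0" for x
  proof -
    have "((\<lambda>x. \<alpha> + \<beta> * ln (norm x)) has_derivative (\<lambda>h. \<beta> * (norm x powr (-2) * inner x h))) (at x)"
      by (rule has_derivative_add[OF has_derivative_const has_derivative_mult_right[OF has_derivative_ln_norm[OF that]], simplified])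
    from has_derivative_compose[OF this flat_exp_has_real_derivative[of n, unfolded has_field_derivative_def]]
    show ?thesis by (simp add: Df_def[abs_def] algebra_simps)
  qed
  moreover have "elementary_fn (\<lambda>x. Df x v)" for v
    unfolding Df_def by (intro elementary_fn.intros)
  ultimately show ?case by blast
next
  case (elementary_inner w)
  show ?case
    by (rule exI[of _ "\<lambda>x v. inner v w"]) (auto intro!: derivative_eq_intros elementary_fn.intros)
next
  case (elementary_add f g)
  then obtain Df Dg where "\<forall>x. x \<noteq> 0 \<longrightarrow> (f has_derivative Df x) (at x)" "\<forall>v. elementary_fn (\<lambda>x. Df x v)"
    and "\<forall>x. x \<noteq> 0 \<longrightarrow> (g has_derivative Dg x) (at x)" "\<forall>v. elementary_fn (\<lambda>x. Dg x v)"
    by blast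
  then show ?case
    by (intro exI[of _ "\<lambda>x v. Df x v + Dg x v"]) (auto intro!: derivative_eq_intros elementary_fn.intros)
next
  case (elementary_mult f g)
  then obtain Df Dg where "\<forall>x. x \<noteq> 0 \<longrightarrow> (f has_derivative Df x) (at x)" "\<forall>v. elementary_fn (\<lambda>x. Df x v)"
    and "\<forall>x. x \<noteq> 0 \<longrightarrow> (g has_derivative Dg x) (at x)" "\<forall>v. elementary_fn (\<lambda>x. Dg x v)"
    by blast
  with elementary_mult.hyps show ?case
    by (intro exI[of _ "\<lambda>x v. f x * Dg x v + Df x v * g x"])
      (auto intro!: derivative_eq_intros elementary_fn.intros)
qed

lemma elementary_fn_smooth: "elementary_fn f \<Longrightarrow> smooth_on (-{0}) f"
proof (rule smooth_on_coinduct_invariant[where P=elementary_fn])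
  fix g :: "'a \<Rightarrow> real"
  assume "elementary_fn g"
  then obtain Dg where Dg: "\<forall>x. x \<noteq> 0 \<longrightarrow> (g has_derivative Dg x) (at x)"
    and "\<forall>v. elementary_fn (\<lambda>x. Dg x v)"
    using elementary_fn_has_derivative by blast
  moreover have "g differentiable_on (-{0})"
    unfolding differentiable_on_def using Dg
    by (metis ComplD differentiableI differentiable_at_withinI singletonI)
  moreover have "\<forall>x\<in>-{0}. frechet_derivative g (at x) v = Dg x v" for v
    using Dg frechet_derivative_at by fastforce
  ultimately show "g differentiable_on - {0} \<and>
      (\<forall>v. \<exists>g'. elementary_fn g' \<and> (\<forall>x\<in>- {0}. frechet_derivative g (at x) v = g' x))"
    by blast
qed auto

section \<open>Integrals over \<open>\<real>\<^sup>N\<close> of compactly supported functions\<close>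

lemma continuous_on_UNIV_vanishing_near_0:
  fixes f :: "'a::euclidean_space \<Rightarrow> real"
  assumes "0 < r0" "continuous_on (-{0}) f" "\<And>x. norm x < r0 \<Longrightarrow> f x = 0"
  shows "continuous_on UNIV f"
proof -
  have "UNIV = ball 0 r0 \<union> (-{0::'a})" using assms(1) by auto
  moreover have "continuous_on (ball 0 r0) f"
    using continuous_on_cong[of "ball 0 r0" "ball 0 r0" f "\<lambda>_. 0"] assms(3) by auto
  ultimately show ?thesis using continuous_on_open_Un[of "ball 0 r0" "-{0}" f] assms(2)
    by (metis open_ball open_Compl closed_singleton)
qed

lemma integrable_continuous_vanishing_outside_ball:
  fixes f :: "'a::euclidean_space \<Rightarrow> real"
  assumes "continuous_on UNIV f" "\<And>x. norm x > R \<Longrightarrow> f x = 0"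
  shows "integrable lborel f"
proof -
  have "integrable lborel (\<lambda>x. indicator (cball 0 R) x *\<^sub>R f x)"
    by (rule borel_integrable_compact) (auto intro: continuous_on_subset[OF assms(1)])
  moreover have "(\<lambda>x. indicator (cball 0 R) x *\<^sub>R f x) = f"
    using assms(2) by (auto simp: indicator_def fun_eq_iff not_le)
  ultimately show ?thesis by simp
qed

lemma integral_UNIV_vanishing_outside_ball:
  fixes f :: "'a::euclidean_space \<Rightarrow> real"
  assumes "continuous_on UNIV f" "\<And>x. norm x > R \<Longrightarrow> f x = 0"
  shows "integral UNIV f = (\<integral>x. f x \<partial>lborel)"
  using integral_lborel[OF integrable_continuous_vanishing_outside_ball[OF assms]] .

lemma integrable_vanishing_off_annulus:
  fixes f :: "'a::euclidean_space \<Rightarrow> real"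
  assumes "0 < r0" "continuous_on (-{0}) f" "\<And>x. norm x < r0 \<or> norm x > R \<Longrightarrow> f x = 0"
  shows "integrable lborel f"
  by (rule integrable_continuous_vanishing_outside_ball[OF continuous_on_UNIV_vanishing_near_0, of r0])
    (use assms in auto)

lemma norm_gt_if_notin_cube:
  fixes x :: "'a::euclidean_space"
  assumes "x \<notin> cbox (-(R *\<^sub>R One)) (R *\<^sub>R One)"
  shows "norm x > R"
proof -
  from assms obtain b where b: "b \<in> Basis" "\<not> (-R \<le> x \<bullet> b \<and> x \<bullet> b \<le> R)"
    by (auto simp: mem_box inner_minus_left)
  then have "\<bar>x \<bullet> b\<bar> > R" by auto
  moreover have "\<bar>x \<bullet> b\<bar> \<le> norm x" using Basis_le_norm[OF b(1)] .
  ultimately show ?thesis by linarith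
qed

lemma has_integral_UNIV_cube:
  fixes g :: "'a::euclidean_space \<Rightarrow> real"
  assumes "continuous_on UNIV g" "\<And>x. norm x > R \<Longrightarrow> g x = 0"
  shows "(g has_integral (integral (cbox (-(R *\<^sub>R One)) (R *\<^sub>R One)) g)) UNIV"
proof -
  let ?B = "cbox (-(R *\<^sub>R One)) (R *\<^sub>R One) :: 'a set"
  have "g integrable_on ?B"
    by (rule integrable_continuous) (auto intro: continuous_on_subset[OF assms(1)])
  then have "(g has_integral (integral ?B g)) ?B" by (simp add: integrable_integral)
  then show ?thesis
    by (rule has_integral_on_superset) (auto intro: assms(2) norm_gt_if_notin_cube)
qed

lemma integral_UNIV_dilation:
  fixes g :: "'a::euclidean_space \<Rightarrow> real"
  assumes "continuous_on UNIV g" "\<And>x. norm x > R \<Longrightarrow> g x = 0" "c > 0"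
  shows "integral UNIV (\<lambda>x. g (c *\<^sub>R x)) = integral UNIV g / c ^ DIM('a)"
proof -
  let ?a = "-(R *\<^sub>R One) :: 'a" and ?b = "R *\<^sub>R One :: 'a"
  let ?I = "integral (cbox ?a ?b) g"
  have g: "(g has_integral ?I) UNIV" by (rule has_integral_UNIV_cube[OF assms(1,2)])
  have "g integrable_on cbox ?a ?b"
    by (rule integrable_continuous) (auto intro: continuous_on_subset[OF assms(1)])
  then have "(g has_integral ?I) (cbox ?a ?b)" by (simp add: integrable_integral)
  from has_integral_affinity'[OF this assms(3), of 0]
  have "((\<lambda>x. g (c *\<^sub>R x)) has_integral ?I /\<^sub>R c ^ DIM('a)) (cbox (?a /\<^sub>R c) (?b /\<^sub>R c))"
    by simp
  then have "((\<lambda>x. g (c *\<^sub>R x)) has_integral ?I /\<^sub>R c ^ DIM('a)) UNIV"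
  proof (rule has_integral_on_superset)
    fix x :: 'a
    assume x: "x \<notin> cbox (?a /\<^sub>R c) (?b /\<^sub>R c)"
    have "c *\<^sub>R x \<notin> cbox ?a ?b"
    proof
      assume "c *\<^sub>R x \<in> cbox ?a ?b"
      then have "x \<in> cbox (?a /\<^sub>R c) (?b /\<^sub>R c)"
        using assms(3) by (auto simp: mem_box inner_minus_left field_simps)
      with x show False by simp
    qed
    then show "g (c *\<^sub>R x) = 0" using norm_gt_if_notin_cube assms(2) by blast
  qed auto
  then show ?thesis
    using g by (simp add: integral_unique divide_inverse_commute)
qed

lemma has_field_derivative_integral_dilation:
  fixes F :: "'a::euclidean_space \<Rightarrow> real" and DF :: "'a \<Rightarrow> 'a \<Rightarrow> real"
  assumes D: "\<And>x. (F has_derivative DF x) (at x)"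
    and C: "continuous_on UNIV (\<lambda>x. DF x x)"
  shows "((\<lambda>t. integral (cbox a b) (\<lambda>x. F (t *\<^sub>R x))) has_field_derivative
      integral (cbox a b) (\<lambda>x. DF x x)) (at 1)"
proof -
  let ?U = "{1/2..2::real}"
  have lin: "linear (DF x)" for x using D has_derivative_linear by blast
  have fx: "((\<lambda>t. F (t *\<^sub>R x)) has_field_derivative DF (t *\<^sub>R x) x) (at t within ?U)" for t x
  proof -
    have "((\<lambda>t. t *\<^sub>R x) has_derivative (\<lambda>s. s *\<^sub>R x)) (at t)"
      by (auto intro!: derivative_eq_intros)
    from has_derivative_compose[OF this D]
    have "((\<lambda>t. F (t *\<^sub>R x)) has_derivative (\<lambda>s. DF (t *\<^sub>R x) (s *\<^sub>R x))) (at t)" .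
    moreover have "(\<lambda>s. DF (t *\<^sub>R x) (s *\<^sub>R x)) = (*) (DF (t *\<^sub>R x) x)"
      using linear_cmul[OF lin] by (auto simp: fun_eq_iff)
    ultimately show ?thesis unfolding has_field_derivative_def
      using has_derivative_at_withinI by fastforce
  qed
  have F_cont: "continuous_on UNIV F"
    using D by (meson continuous_at_imp_continuous_on has_derivative_continuous)
  have scaled_cont: "continuous_on UNIV (\<lambda>x. F (t *\<^sub>R x))" for t
    by (intro continuous_on_compose2[OF F_cont]) (auto intro!: continuous_intros)
  have int: "(\<lambda>x. F (t *\<^sub>R x)) integrable_on cbox a b" for t
    by (rule integrable_continuous) (auto intro: continuous_on_subset[OF scaled_cont])
  have cont: "continuous_on (?U \<times> cbox a b) (\<lambda>(t, x). DF (t *\<^sub>R x) x)"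
  proof -
    have "continuous_on (?U \<times> cbox a b) (\<lambda>p. fst p *\<^sub>R snd p)"
      by (intro continuous_intros)
    from continuous_on_compose2[OF C this]
    have "continuous_on (?U \<times> cbox a b) (\<lambda>p. DF (fst p *\<^sub>R snd p) (fst p *\<^sub>R snd p) / fst p)"
      by (intro continuous_on_divide continuous_intros) auto
    moreover have "DF (fst p *\<^sub>R snd p) (fst p *\<^sub>R snd p) / fst p = (\<lambda>(t, x). DF (t *\<^sub>R x) x) p"
      if "p \<in> ?U \<times> cbox a b" for p
      using linear_cmul[OF lin, of "fst p *\<^sub>R snd p" "fst p" "snd p"] that by (auto simp: case_prod_beta)
    ultimately show ?thesis by (rule continuous_on_eq)
  qed
  have "((\<lambda>t. integral (cbox a b) (\<lambda>x. F (t *\<^sub>R x))) has_field_derivative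
      integral (cbox a b) (\<lambda>x. DF (1 *\<^sub>R x) x)) (at 1 within ?U)"
    by (rule leibniz_rule_field_derivative[where fx="\<lambda>t x. DF (t *\<^sub>R x) x"])
      (use fx int cont in simp_all)
  moreover have "at (1::real) within ?U = at 1" by (rule at_within_interior) auto
  ultimately show ?thesis by simp
qed

text \<open>Differentiating \<open>\<integral>F(t x) dx = t^-N \<integral>F(x) dx\<close> at \<open>t = 1\<close>; this replaces the divergence
  theorem for the radial field \<open>F(x) x\<close>.\<close>

lemma integral_euler_derivative:
  fixes F :: "'a::euclidean_space \<Rightarrow> real" and DF :: "'a \<Rightarrow> 'a \<Rightarrow> real"
  assumes D: "\<And>x. (F has_derivative DF x) (at x)"
    and C: "continuous_on UNIV (\<lambda>x. DF x x)"
    and R: "R > 0" "\<And>x. norm x > R \<Longrightarrow> F x = 0" "\<And>x. norm x > R \<Longrightarrow> DF x x = 0"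
  shows "integral UNIV (\<lambda>x. DF x x) = - real DIM('a) * integral UNIV F"
proof -
  let ?B = "cbox (-((2*R) *\<^sub>R One)) ((2*R) *\<^sub>R One) :: 'a set"
  define I where "I = integral UNIV F"
  have F_cont: "continuous_on UNIV F"
    using D by (meson continuous_at_imp_continuous_on has_derivative_continuous)
  have scaled: "integral ?B (\<lambda>x. F (t *\<^sub>R x)) = I / t ^ DIM('a)" if "dist t 1 < 1/2" for t
  proof -
    have t: "t \<ge> 1/2" using that unfolding dist_real_def by linarith
    have vanish: "F (t *\<^sub>R x) = 0" if "norm x > 2 * R" for x
    proof -
      have "t * norm x \<ge> (1/2) * norm x" using t by (intro mult_right_mono) auto
      then show ?thesis using that t R(2)[of "t *\<^sub>R x"] by auto
    qed
    have "continuous_on UNIV (\<lambda>x. F (t *\<^sub>R x))"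
      by (intro continuous_on_compose2[OF F_cont]) (auto intro!: continuous_intros)
    then have "((\<lambda>x. F (t *\<^sub>R x)) has_integral integral ?B (\<lambda>x. F (t *\<^sub>R x))) UNIV"
      by (rule has_integral_UNIV_cube) (use vanish in auto)
    then have "integral ?B (\<lambda>x. F (t *\<^sub>R x)) = integral UNIV (\<lambda>x. F (t *\<^sub>R x))"
      by (simp add: integral_unique)
    also have "\<dots> = I / t ^ DIM('a)" unfolding I_def
      by (rule integral_UNIV_dilation[OF F_cont]) (use R(2) t in auto)
    finally show ?thesis .
  qed
  have "((\<lambda>t. I / t ^ DIM('a)) has_field_derivative (- real DIM('a) * I)) (at 1)"
    by (auto intro!: derivative_eq_intros)
  then have "((\<lambda>t. integral ?B (\<lambda>x. F (t *\<^sub>R x))) has_field_derivative (- real DIM('a) * I)) (at 1)"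
    by (rule has_field_derivative_transform_within[where d="1/2"])
      (auto simp: scaled)
  then have "integral ?B (\<lambda>x. DF x x) = - real DIM('a) * I"
    using DERIV_unique has_field_derivative_integral_dilation[OF D C] by blast
  moreover have "((\<lambda>x. DF x x) has_integral integral ?B (\<lambda>x. DF x x)) UNIV"
    by (rule has_integral_UNIV_cube[OF C]) (use R in auto)
  ultimately show ?thesis using I_def by (simp add: integral_unique)
qed

lemma has_bochner_integral_euler_derivative:
  fixes F :: "'a::euclidean_space \<Rightarrow> real" and DF :: "'a \<Rightarrow> 'a \<Rightarrow> real"
  assumes D: "\<And>x. (F has_derivative DF x) (at x)"
    and C: "continuous_on UNIV (\<lambda>x. DF x x)"
    and R: "R > 0" "\<And>x. norm x > R \<Longrightarrow> F x = 0" "\<And>x. norm x > R \<Longrightarrow> DF x x = 0"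
  shows "has_bochner_integral lborel (\<lambda>x. DF x x + DIM('a) * F x) 0"
proof -
  have F_cont: "continuous_on UNIV F"
    using D by (meson continuous_at_imp_continuous_on has_derivative_continuous)
  have "integral UNIV (\<lambda>x. DF x x) = (\<integral>x. DF x x \<partial>lborel)" "integral UNIV F = (\<integral>x. F x \<partial>lborel)"
    using C F_cont R(2,3) by (blast intro: integral_UNIV_vanishing_outside_ball)+
  with integral_euler_derivative[OF assms]
  have sum_0: "(\<integral>x. DF x x \<partial>lborel) + DIM('a) * (\<integral>x. F x \<partial>lborel) = 0"
    by simp
  have "integrable lborel (\<lambda>x. DF x x)" "integrable lborel F"
    using C F_cont R(2,3) by (blast intro: integrable_continuous_vanishing_outside_ball)+
  then have "has_bochner_integral lborel (\<lambda>x. DF x x + DIM('a) * F x)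
      ((\<integral>x. DF x x \<partial>lborel) + DIM('a) * (\<integral>x. F x \<partial>lborel))"
    by (intro has_bochner_integral_add has_bochner_integral_mult_right has_bochner_integral_integrable)
  then show ?thesis unfolding sum_0 .
qed

lemma integral_pos_if_continuous_pos:
  fixes f :: "'a::euclidean_space \<Rightarrow> real"
  assumes "continuous_on UNIV f" "\<And>x. f x \<ge> 0" "integrable lborel f" "f x0 > 0"
  shows "(\<integral>x. f x \<partial>lborel) > 0"
proof -
  define d where "d = f x0 / 2"
  have "d > 0" using assms(4) d_def by auto
  have "isCont f x0" using assms(1) continuous_on_eq_continuous_at by blast
  then obtain e where e: "e > 0" "\<And>x. dist x x0 < e \<Longrightarrow> dist (f x) (f x0) < d"
    unfolding continuous_at_eps_delta d_def using assms(4) by (metis half_gt_zero)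
  have le: "indicator (cball x0 (e/2)) x *\<^sub>R d \<le> f x" for x
  proof (cases "x \<in> cball x0 (e/2)")
    case True
    then have "dist (f x) (f x0) < d" using e by (intro e(2)) (simp add: dist_commute)
    then have "f x \<ge> d" unfolding d_def dist_real_def by linarith
    then show ?thesis using True by simp
  next
    case False
    then show ?thesis using assms(2) by simp
  qed
  have "0 < measure lborel (cball x0 (e/2)) * d"
    using content_cball_pos[of "e/2" x0] e \<open>d > 0\<close> by simp
  also have "\<dots> = (\<integral>x. indicator (cball x0 (e/2)) x *\<^sub>R d \<partial>lborel)"
    by simp
  also have "\<dots> \<le> (\<integral>x. f x \<partial>lborel)"
    by (rule integral_mono[OF borel_integrable_compact assms(3) le]) auto
  finally show ?thesis .
qed

section \<open>Test functions and the volume density\<close>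

lemma test_fnE:
  fixes u :: "'a::euclidean_space \<Rightarrow> real"
  assumes "test_fn u"
  obtains r0 R where "0 < r0" "r0 < R"
    "\<And>x. norm x < r0 \<or> norm x > R \<Longrightarrow> u x = 0"
    "\<And>x. norm x < r0 \<or> norm x > R \<Longrightarrow> frechet_derivative u (at x) = (\<lambda>_. 0)"
    "\<And>x. (u has_derivative frechet_derivative u (at x)) (at x)"
    "\<And>v. continuous_on (-{0}) (\<lambda>x. frechet_derivative u (at x) v)"
proof -
  let ?S = "{x. u x \<noteq> 0}"
  have smooth: "smooth_on (-{0}) u" and "compact (closure ?S)" and "0 \<notin> closure ?S"
    using assms unfolding test_fn_def by auto
  then obtain r0 where "r0 > 0" and r0: "\<And>y. y \<in> ?S \<Longrightarrow> \<not> dist y 0 < r0"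
    unfolding closure_approachable by blast
  from \<open>compact (closure ?S)\<close> have "bounded ?S" by simp
  then obtain a where a: "\<And>x. x \<in> ?S \<Longrightarrow> norm x \<le> a" unfolding bounded_iff by blast
  define R where "R = max a r0 + 1"
  have vanish: "u x = 0" if "norm x < r0 \<or> norm x > R" for x
    using that r0[of x] a[of x] unfolding R_def by force
  have open_off: "open {x::'a. norm x < r0 \<or> norm x > R}"
    by (intro open_Collect_disj open_Collect_less continuous_intros)
  have deriv_0: "(u has_derivative (\<lambda>_. 0)) (at x)" if "norm x < r0 \<or> norm x > R" for x
    by (rule has_derivative_transform_within_open[OF has_derivative_const open_off])
      (use that vanish in auto)
  have deriv: "(u has_derivative frechet_derivative u (at x)) (at x)" for x
  proof (cases "x = 0")
    case True
    then show ?thesis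
      using deriv_0[of x] \<open>r0 > 0\<close> frechet_derivative_at by fastforce
  next
    case False
    then have "u differentiable at x"
      using smooth_onD(1)[OF smooth] differentiable_on_eq_differentiable_at[of "-{0}" u] by auto
    then show ?thesis using frechet_derivative_works by blast
  qed
  have "continuous_on (-{0}) (\<lambda>x. frechet_derivative u (at x) v)" for v
    using smooth_onD(1)[OF smooth_onD(2)[OF smooth]] differentiable_imp_continuous_on by blast
  with vanish deriv_0 deriv \<open>r0 > 0\<close> show ?thesis
    by (intro that[of r0 R]) (auto simp: R_def frechet_derivative_at[symmetric])
qed

lemma frechet_derivative_self_eq_radial_deriv:
  assumes "linear (frechet_derivative u (at x))"
  shows "frechet_derivative u (at x) x = norm x * radial_deriv u x"
proof (cases "x = 0")
  case True
  then show ?thesis using linear_0[OF assms] by simp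
next
  case False
  then have "frechet_derivative u (at x) x = frechet_derivative u (at x) (norm x *\<^sub>R (x /\<^sub>R norm x))"
    by simp
  then show ?thesis unfolding radial_deriv_def by (simp add: linear_cmul[OF assms])
qed

lemma continuous_on_frechet_derivative_apply:
  fixes u :: "'a::euclidean_space \<Rightarrow> real"
  assumes "\<And>x. x \<in> S \<Longrightarrow> linear (frechet_derivative u (at x))"
    and "\<And>v. continuous_on S (\<lambda>x. frechet_derivative u (at x) v)"
    and "continuous_on S g"
  shows "continuous_on S (\<lambda>x. frechet_derivative u (at x) (g x))"
proof -
  have sum_cont: "continuous_on S (\<lambda>x. \<Sum>b\<in>Basis. (g x \<bullet> b) * frechet_derivative u (at x) b)"
    by (intro continuous_intros assms(2,3))
  have componentwise: "frechet_derivative u (at x) (g x)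
      = (\<Sum>b\<in>Basis. (g x \<bullet> b) * frechet_derivative u (at x) b)" if "x \<in> S" for x
    using Linear_Algebra.linear_componentwise[OF assms(1)[OF that], of "g x" "1::real"]
    by (simp only: inner_real_def mult_1_right)
  show ?thesis
    by (rule continuous_on_eq[OF sum_cont]) (simp add: componentwise)
qed

lemma continuous_on_radial_deriv:
  fixes u :: "'a::euclidean_space \<Rightarrow> real"
  assumes "test_fn u"
  shows "continuous_on (-{0}) (radial_deriv u)"
  unfolding radial_deriv_def
proof (rule continuous_on_frechet_derivative_apply)
  obtain r0 R where deriv: "\<And>x. (u has_derivative frechet_derivative u (at x)) (at x)"
    and cont: "\<And>v. continuous_on (-{0}) (\<lambda>x. frechet_derivative u (at x) v)"
    using test_fnE[OF assms] by metis
  show "linear (frechet_derivative u (at x))" for x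
    using has_derivative_linear[OF deriv] .
  show "continuous_on (-{0}) (\<lambda>x. frechet_derivative u (at x) v)" for v
    by (rule cont)
  show "continuous_on (-{0}) (\<lambda>x::'a. x /\<^sub>R norm x)"
    by (intro continuous_intros) auto
qed

lemma radial_deriv_at_0:
  assumes "test_fn u"
  shows "radial_deriv u 0 = 0"
proof -
  have "(u has_derivative frechet_derivative u (at 0)) (at 0)"
    using test_fnE[OF assms] by metis
  then show ?thesis
    unfolding radial_deriv_def using linear_0[OF has_derivative_linear] by simp
qed

lemma vol_density_eq:
  fixes x :: "'a::euclidean_space"
  assumes "x \<noteq> 0"
  shows "vol_density m x = exp ((real DIM('a) - 1) * norm x ^ (2*m))"
  using assms DIM_positive[where 'a='a]
  by (simp add: vol_density_def psi_def exp_of_nat_mult[symmetric] of_nat_diff Suc_le_eq)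

lemma continuous_on_vol_density: "continuous_on (-{0}) (vol_density m :: 'a::euclidean_space \<Rightarrow> real)"
proof (rule continuous_on_eq)
  show "continuous_on (-{0}) (\<lambda>x::'a. exp ((real DIM('a) - 1) * norm x ^ (2*m)))"
    by (intro continuous_intros)
qed (simp add: vol_density_eq)

lemma vol_density_nonneg: "vol_density m x \<ge> 0"
  by (simp add: vol_density_def psi_def)

lemma vol_density_ge_1:
  fixes x :: "'a::euclidean_space"
  assumes "x \<noteq> 0"
  shows "vol_density m x \<ge> 1"
  using vol_density_eq[OF assms, of m] DIM_positive[where 'a='a] by (simp add: Suc_le_eq)

lemma vol_density_le:
  fixes x :: "'a::euclidean_space"
  assumes "x \<noteq> 0" "norm x \<le> \<rho>" "\<rho> \<le> 1" "m \<ge> 1"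
  shows "vol_density m x \<le> exp ((real DIM('a) - 1) * \<rho>)"
proof -
  have "norm x ^ (2*m) \<le> norm x ^ 1"
    using assms by (intro power_decreasing) auto
  then have "(real DIM('a) - 1) * norm x ^ (2*m) \<le> (real DIM('a) - 1) * \<rho>"
    using assms(2) DIM_positive[where 'a='a] by (intro mult_left_mono) (auto simp: Suc_le_eq)
  then show ?thesis using vol_density_eq[OF assms(1), of m] by simp
qed

section \<open>The Hardy inequality\<close>

lemma has_derivative_test_fn_square_radial:
  fixes u :: "'a::euclidean_space \<Rightarrow> real" and w w' :: "real \<Rightarrow> real"
  assumes "test_fn u"
    and w: "\<And>r. r > 0 \<Longrightarrow> (w has_real_derivative w' r) (at r)"
  shows "((\<lambda>x. u x * u x * w (norm x)) has_derivative (\<lambda>y. 2 * u x * frechet_derivative u (at x) y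
      * w (norm x) + u x * u x * (w' (norm x) * (x \<bullet> y / norm x)))) (at x)"
proof -
  obtain r0 R where "0 < r0"
    and vanish: "\<And>x. norm x < r0 \<or> norm x > R \<Longrightarrow> u x = 0"
    and deriv: "\<And>x. (u has_derivative frechet_derivative u (at x)) (at x)"
    using test_fnE[OF assms(1)] by metis
  show ?thesis
  proof (cases "norm x < r0")
    case True
    have "((\<lambda>_. 0::real) has_derivative (\<lambda>_. 0)) (at x)" by simp
    then have "((\<lambda>x. u x * u x * w (norm x)) has_derivative (\<lambda>_. 0)) (at x)"
      by (rule has_derivative_transform_within_open[where s="ball 0 r0"]) (use True vanish in auto)
    then show ?thesis using vanish True by simp
  next
    case False
    then have "x \<noteq> 0" using \<open>0 < r0\<close> by auto
    have "((\<lambda>x. w (norm x)) has_derivative (\<lambda>y. w' (norm x) * (y \<bullet> sgn x))) (at x)"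
      using has_derivative_compose[OF has_derivative_norm[OF \<open>x \<noteq> 0\<close>]
          w[unfolded has_field_derivative_def]] \<open>x \<noteq> 0\<close>
      by simp
    from has_derivative_mult[OF has_derivative_mult[OF deriv deriv] this]
    show ?thesis
      by (rule has_derivative_eq_rhs)
        (auto simp: fun_eq_iff sgn_div_norm inner_commute algebra_simps divide_inverse)
  qed
qed

text \<open>The divergence of the field \<open>u^2 w(|x|) x\<close> integrates to zero.\<close>

lemma has_bochner_integral_radial_divergence:
  fixes u :: "'a::euclidean_space \<Rightarrow> real" and w w' :: "real \<Rightarrow> real"
  assumes "test_fn u"
    and w: "\<And>r. r > 0 \<Longrightarrow> (w has_real_derivative w' r) (at r)"
    and "continuous_on {0<..} w'"
  shows "has_bochner_integral lborel (\<lambda>x. 2 * u x * radial_deriv u x * norm x * w (norm x)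
      + (u x)\<^sup>2 * (norm x * w' (norm x) + DIM('a) * w (norm x))) 0"
proof -
  obtain r0 R where "0 < r0" "r0 < R"
    and vanish: "\<And>x. norm x < r0 \<or> norm x > R \<Longrightarrow> u x = 0"
    and deriv: "\<And>x. (u has_derivative frechet_derivative u (at x)) (at x)"
    using test_fnE[OF assms(1)] by metis
  define G where "G x = 2 * u x * radial_deriv u x * norm x * w (norm x) + (u x)\<^sup>2 * (norm x * w' (norm x))"
    for x
  note F_deriv = has_derivative_test_fn_square_radial[OF assms(1,2)]
  have DF_self: "2 * u x * frechet_derivative u (at x) x * w (norm x)
      + u x * u x * (w' (norm x) * (x \<bullet> x / norm x)) = G x" for x
  proof (cases "x = 0")
    case True
    then show ?thesis using vanish[of x] \<open>0 < r0\<close> by (simp add: G_def)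
  next
    case False
    have "frechet_derivative u (at x) x = norm x * radial_deriv u x"
      by (rule frechet_derivative_self_eq_radial_deriv[OF has_derivative_linear[OF deriv]])
    moreover have "x \<bullet> x / norm x = norm x"
      using False by (simp add: dot_square_norm power2_eq_square)
    ultimately show ?thesis by (simp add: G_def power2_eq_square mult_ac)
  qed
  have "continuous_on {0<..} w"
    by (rule DERIV_continuous_on[where D=w']) (use w in \<open>auto intro: has_field_derivative_at_within\<close>)
  then have w_norm: "continuous_on (-{0}) (\<lambda>x::'a. w (norm x))"
    by (rule continuous_on_compose2) (auto intro!: continuous_intros)
  have w'_norm: "continuous_on (-{0}) (\<lambda>x::'a. w' (norm x))"
    by (rule continuous_on_compose2[OF assms(3)]) (auto intro!: continuous_intros)
  have u_cont: "continuous_on UNIV u"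
    using deriv by (meson continuous_at_imp_continuous_on has_derivative_continuous)
  have "continuous_on (-{0}) G"
    unfolding G_def
    by (intro continuous_intros w_norm w'_norm continuous_on_subset[OF u_cont]
        continuous_on_radial_deriv[OF assms(1)]) auto
  then have G_cont: "continuous_on UNIV G"
    by (rule continuous_on_UNIV_vanishing_near_0[OF \<open>0 < r0\<close>]) (use vanish in \<open>simp add: G_def\<close>)
  have "has_bochner_integral lborel (\<lambda>x. G x + DIM('a) * (u x * u x * w (norm x))) 0"
    using has_bochner_integral_euler_derivative[OF F_deriv, of R] G_cont vanish \<open>0 < r0\<close> \<open>r0 < R\<close>
    unfolding DF_self by (simp add: G_def)
  moreover have "(\<lambda>x. G x + DIM('a) * (u x * u x * w (norm x))) = (\<lambda>x. 2 * u x * radial_deriv u x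
      * norm x * w (norm x) + (u x)\<^sup>2 * (norm x * w' (norm x) + DIM('a) * w (norm x)))"
    by (auto simp: fun_eq_iff G_def power2_eq_square algebra_simps)
  ultimately show ?thesis by simp
qed

text \<open>The weight \<open>w\<close> of the field \<open>u^2 w(|x|) x\<close>; it is chosen so that the divergence
  completes the square in \<open>hardy_weight_square_identity\<close>.\<close>

definition hardy_weight :: "nat \<Rightarrow> real \<Rightarrow> real \<Rightarrow> real" where
  "hardy_weight m N r = ((N - 2) / 2 / r^2 + real m * (N - 1) * r^(2*m - 2)) * exp ((N - 1) * r^(2*m))"

definition hardy_weight_deriv :: "nat \<Rightarrow> real \<Rightarrow> real \<Rightarrow> real" where
  "hardy_weight_deriv m N r =
     (- (N - 2) / r^3 + real m * (N - 1) * (2 * real m - 2) * r^(2*m - 2) / r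
      + ((N - 2) / 2 / r^2 + real m * (N - 1) * r^(2*m - 2)) * (N - 1) * (2 * real m) * r^(2*m) / r)
     * exp ((N - 1) * r^(2*m))"

lemma hardy_weight_has_real_derivative:
  assumes "r > 0" "m \<ge> 1"
  shows "(hardy_weight m N has_real_derivative hardy_weight_deriv m N r) (at r)"
proof -
  have pow: "((\<lambda>r. r ^ k) has_real_derivative real k * r ^ k / r) (at r)" for k
  proof -
    have "real k * r ^ (k - 1) = real k * r ^ k / r"
      using assms(1) by (cases k) auto
    then show ?thesis using DERIV_pow[of k r] by simp
  qed
  have inv: "((\<lambda>r. (N - 2) / 2 / r^2) has_real_derivative - (N - 2) / r^3) (at r)"
    using assms(1) by (auto intro!: derivative_eq_intros simp: field_simps eval_nat_numeral)
  have exp: "((\<lambda>r. exp ((N - 1) * r^(2*m))) has_real_derivative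
      exp ((N - 1) * r^(2*m)) * ((N - 1) * (real (2*m) * r^(2*m) / r))) (at r)"
    by (rule DERIV_fun_exp[OF DERIV_cmult[OF pow]])
  have collect: "(- (N - 2) / r^3 + real m * (N - 1) * (real (2*m - 2) * P / r)) * E
      + E * ((N - 1) * (real (2*m) * Q / r)) * H
    = (- (N - 2) / r^3 + real m * (N - 1) * (2 * real m - 2) * P / r
      + H * (N - 1) * (2 * real m) * Q / r) * E" for P Q E H
    using assms(2) by (simp add: of_nat_diff algebra_simps)
  show ?thesis
    unfolding hardy_weight_def[abs_def] hardy_weight_deriv_def
    by (rule DERIV_cong[OF DERIV_mult[OF DERIV_add[OF inv DERIV_cmult[OF pow]] exp] collect])
qed

lemma continuous_on_hardy_weight_deriv: "continuous_on {0<..} (hardy_weight_deriv m N)"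
  unfolding hardy_weight_deriv_def[abs_def] by (intro continuous_intros) auto

lemma hardy_weight_square_identity:
  fixes N r U D :: real
  assumes "r > 0" "m \<ge> 1"
  defines "E \<equiv> exp ((N - 1) * r^(2*m))"
  shows "D\<^sup>2 * E + (2 * U * D * r * hardy_weight m N r
        + U\<^sup>2 * (r * hardy_weight_deriv m N r + N * hardy_weight m N r))
    = (N - 2)\<^sup>2 / 4 * (U\<^sup>2 / r\<^sup>2 * E) + (real m)\<^sup>2 * (N - 1)\<^sup>2 * (r^(4*m - 2) * U\<^sup>2 * E)
      + real m * (N - 1) * (N - 2 + 2 * real m) * (r^(2*m - 2) * U\<^sup>2 * E)
      + (D + ((N - 2) / 2 / r + real m * (N - 1) * r^(2*m - 1)) * U)\<^sup>2 * E"
proof -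
  define q where "q = r^(2*m - 2)"
  obtain k where "m = Suc k" using assms(2) by (cases m) auto
  then have powers: "r^(2*m) = q * r\<^sup>2" "r^(4*m - 2) = q\<^sup>2 * r\<^sup>2" "r^(2*m - 1) = q * r"
    unfolding q_def by (simp_all add: power_add[symmetric] power_mult[symmetric] mult.commute)
  define a where "a = (N - 2) / 2"
  define b where "b = real m * (N - 1)"
  have weight: "r * hardy_weight m N r = (a / r + b * q * r) * E"
    unfolding hardy_weight_def E_def[symmetric] q_def[symmetric] a_def b_def
    using assms(1) by (simp add: field_simps power2_eq_square)
  have weight_deriv: "r * hardy_weight_deriv m N r + N * hardy_weight m N r
      = (2 * a\<^sup>2 / r\<^sup>2 + 2 * b * (N - 2 + real m) * q + 2 * b\<^sup>2 * q\<^sup>2 * r\<^sup>2) * E"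
    unfolding hardy_weight_def hardy_weight_deriv_def E_def[symmetric]
    unfolding q_def[symmetric] powers a_def b_def
    using assms(1) by (simp add: field_simps power2_eq_square power3_eq_cube; algebra)
  have "(N - 2)\<^sup>2 / 4 = a\<^sup>2" "real m * (N - 1) * (N - 2 + 2 * real m) = b * (N - 2 + 2 * real m)"
    "(real m)\<^sup>2 * (N - 1)\<^sup>2 = b\<^sup>2" "(N - 2) / 2 / r + real m * (N - 1) * (q * r) = a / r + b * q * r"
    "N - 2 = 2 * a"
    unfolding a_def b_def by (simp_all add: power2_eq_square)
  then show ?thesis
    unfolding powers q_def[symmetric] mult.assoc[of "2 * U * D" r] weight weight_deriv
    using assms(1) by (simp add: field_simps power2_eq_square; algebra)
qed

lemma hardy_integrand_le:
  fixes x :: "'a::euclidean_space" and U D :: real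
  assumes "x \<noteq> 0" "m \<ge> 1"
  defines "N \<equiv> real DIM('a)"
  shows "(N - 2)\<^sup>2 / 4 * (U\<^sup>2 / (norm x)\<^sup>2 * vol_density m x)
      + (real m)\<^sup>2 * (N - 1)\<^sup>2 * (norm x ^ (4*m - 2) * U\<^sup>2 * vol_density m x)
      + real m * (N - 1) * (N - 2 + 2 * real m) * (norm x ^ (2*m - 2) * U\<^sup>2 * vol_density m x)
      - (2 * U * D * norm x * hardy_weight m N (norm x)
        + U\<^sup>2 * (norm x * hardy_weight_deriv m N (norm x) + N * hardy_weight m N (norm x)))
    \<le> D\<^sup>2 * vol_density m x"
proof -
  have "norm x > 0" using assms(1) by simp
  have vol: "vol_density m x = exp ((N - 1) * norm x ^ (2*m))"
    using vol_density_eq[OF assms(1)] by (simp add: N_def)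
  have "(D + ((N - 2) / 2 / norm x + real m * (N - 1) * norm x ^ (2*m - 1)) * U)\<^sup>2
      * exp ((N - 1) * norm x ^ (2*m)) \<ge> 0"
    by simp
  then show ?thesis
    unfolding vol
    using hardy_weight_square_identity[OF \<open>norm x > 0\<close> assms(2), where N=N and D=D and U=U]
    by linarith
qed

theorem hardy_inequality:
  fixes u :: "'a::euclidean_space \<Rightarrow> real"
  assumes "m \<ge> 1" "test_fn u"
  shows "hardy_rhs m ((real DIM('a) - 2)\<^sup>2 / 4) u \<le> model_integral m (\<lambda>x. (radial_deriv u x)\<^sup>2)"
proof -
  define N where "N = real DIM('a)"
  obtain r0 R where "0 < r0"
    and vanish: "\<And>x. norm x < r0 \<or> norm x > R \<Longrightarrow> u x = 0"
    and deriv_vanish: "\<And>x. norm x < r0 \<or> norm x > R \<Longrightarrow> frechet_derivative u (at x) = (\<lambda>_. 0)"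
    and deriv: "\<And>x. (u has_derivative frechet_derivative u (at x)) (at x)"
    using test_fnE[OF assms(2)] by metis
  have radial_vanish: "radial_deriv u x = 0" if "norm x < r0 \<or> norm x > R" for x
    using deriv_vanish[OF that] by (simp add: radial_deriv_def)
  define divergence where "divergence x = 2 * u x * radial_deriv u x * norm x * hardy_weight m N (norm x)
      + (u x)\<^sup>2 * (norm x * hardy_weight_deriv m N (norm x) + N * hardy_weight m N (norm x))" for x
  have "has_bochner_integral lborel divergence 0"
    unfolding divergence_def N_def
    by (rule has_bochner_integral_radial_divergence[OF assms(2) hardy_weight_has_real_derivative
          continuous_on_hardy_weight_deriv]) (use assms(1) in auto)
  then have divergence: "integrable lborel divergence" "(\<integral>x. divergence x \<partial>lborel) = 0"
    by (simp_all add: has_bochner_integral_iff)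
  define f1 where "f1 x = (radial_deriv u x)\<^sup>2 * vol_density m x" for x
  define f2 where "f2 x = (u x)\<^sup>2 / (norm x)\<^sup>2 * vol_density m x" for x
  define f3 where "f3 x = norm x ^ (4*m - 2) * (u x)\<^sup>2 * vol_density m x" for x
  define f4 where "f4 x = norm x ^ (2*m - 2) * (u x)\<^sup>2 * vol_density m x" for x
  have u_cont: "continuous_on (-{0}) u"
    using deriv by (meson continuous_at_imp_continuous_on has_derivative_continuous)
  have "integrable lborel f1" "integrable lborel f2" "integrable lborel f3" "integrable lborel f4"
    unfolding f1_def f2_def f3_def f4_def
    by (rule integrable_vanishing_off_annulus[OF \<open>0 < r0\<close>, where R=R];
        auto intro!: continuous_intros u_cont continuous_on_vol_density
          continuous_on_radial_deriv[OF assms(2)] simp: vanish radial_vanish)+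
  note integrable_lhs = this(1) and integrable_rhs = this(2-4)
  define c2 where "c2 = (N - 2)\<^sup>2 / 4"
  define c3 where "c3 = (real m)\<^sup>2 * (N - 1)\<^sup>2"
  define c4 where "c4 = real m * (N - 1) * (N - 2 + 2 * real m)"
  have pointwise: "c2 * f2 x + c3 * f3 x + c4 * f4 x - divergence x \<le> f1 x" for x
  proof (cases "x = 0")
    case True
    then show ?thesis using \<open>0 < r0\<close>
      by (simp add: f1_def f2_def f3_def f4_def divergence_def vanish radial_vanish)
  next
    case False
    from hardy_integrand_le[OF False assms(1), where U="u x" and D="radial_deriv u x"]
    show ?thesis
      unfolding f1_def f2_def f3_def f4_def divergence_def c2_def c3_def c4_def N_def .
  qed
  have "(\<integral>x. c2 * f2 x + c3 * f3 x + c4 * f4 x - divergence x \<partial>lborel) \<le> (\<integral>x. f1 x \<partial>lborel)"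
    using integrable_lhs integrable_rhs divergence(1) pointwise
    by (intro integral_mono) auto
  moreover have "(\<integral>x. c2 * f2 x + c3 * f3 x + c4 * f4 x - divergence x \<partial>lborel)
      = c2 * (\<integral>x. f2 x \<partial>lborel) + c3 * (\<integral>x. f3 x \<partial>lborel) + c4 * (\<integral>x. f4 x \<partial>lborel)"
    using integrable_rhs divergence by simp
  ultimately show ?thesis
    unfolding hardy_rhs_def model_integral_def c2_def c3_def c4_def f1_def f2_def f3_def f4_def N_def
    by (simp add: mult.assoc)
qed

section \<open>Sharpness of the constant\<close>

definition bump :: "real \<Rightarrow> real" where
  "bump t = flat_exp 0 (2 + t) * flat_exp 0 (-1 - t)"

definition bump_deriv :: "real \<Rightarrow> real" where
  "bump_deriv t = flat_exp 2 (2 + t) * flat_exp 0 (-1 - t) - flat_exp 0 (2 + t) * flat_exp 2 (-1 - t)"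

lemma bump_pos: "-2 < t \<Longrightarrow> t < -1 \<Longrightarrow> bump t > 0"
  by (simp add: bump_def flat_exp_pos)

lemma bump_eq_0: "\<not> (-2 < t \<and> t < -1) \<Longrightarrow> bump t = 0"
  by (auto simp: bump_def flat_exp_eq_0)

lemma bump_deriv_eq_0: "\<not> (-2 < t \<and> t < -1) \<Longrightarrow> bump_deriv t = 0"
  by (auto simp: bump_deriv_def flat_exp_eq_0)

lemma bump_has_real_derivative: "(bump has_real_derivative bump_deriv t) (at t)"
proof -
  have flat: "(flat_exp 0 has_real_derivative flat_exp 2 s) (at s)" for s
    using flat_exp_has_real_derivative[of 0 s] by (simp add: numeral_2_eq_2)
  have "((\<lambda>t. flat_exp 0 (2 + t)) has_real_derivative flat_exp 2 (2 + t) * 1) (at t)"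
    by (rule DERIV_chain2[OF flat]) (auto intro!: derivative_eq_intros)
  moreover have "((\<lambda>t. flat_exp 0 (-1 - t)) has_real_derivative flat_exp 2 (-1 - t) * (-1)) (at t)"
    by (rule DERIV_chain2[OF flat]) (auto intro!: derivative_eq_intros)
  ultimately show ?thesis
    unfolding bump_def[abs_def] bump_deriv_def
    using DERIV_mult by (fastforce simp: algebra_simps)
qed

lemma continuous_on_bump: "continuous_on A bump"
  unfolding bump_def[abs_def]
  by (intro continuous_intros continuous_on_compose2[OF continuous_on_flat_exp[of UNIV]]) auto

lemma continuous_on_bump_deriv: "continuous_on A bump_deriv"
  unfolding bump_deriv_def[abs_def]
  by (intro continuous_intros continuous_on_compose2[OF continuous_on_flat_exp[of UNIV]]) auto

text \<open>On \<open>[-2, -1]\<close> the three shifted copies of \<open>bump\<close> have no common zero, so the continuous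
  function \<open>bump_deriv^2\<close> is dominated by the sum of their squares. Since the shifts become
  translations of \<open>ln |x|\<close>, this bounds \<open>\<integral>|x|^-N bump_deriv(ln |x| / L)^2 dx\<close> by a multiple
  of the corresponding integral of \<open>bump^2\<close> that does not depend on \<open>L\<close>.\<close>

lemma bump_deriv_square_le:
  obtains C where "C \<ge> 0"
    "\<And>t. (bump_deriv t)\<^sup>2 \<le> C * ((bump (t + 1/3))\<^sup>2 + (bump t)\<^sup>2 + (bump (t - 1/3))\<^sup>2)"
proof -
  define S where "S t = (bump (t + 1/3))\<^sup>2 + (bump t)\<^sup>2 + (bump (t - 1/3))\<^sup>2" for t
  have S_nonneg: "S t \<ge> 0" for t unfolding S_def by auto
  have S_pos: "S t > 0" if "t \<in> {-2..-1}" for t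
  proof -
    consider "t \<le> -5/3" | "-5/3 < t \<and> t < -4/3" | "t \<ge> -4/3" by linarith
    then have "bump (t + 1/3) > 0 \<or> bump t > 0 \<or> bump (t - 1/3) > 0"
      using that by cases (auto intro!: bump_pos)
    then show ?thesis
      unfolding S_def by (smt (verit) zero_less_power2 zero_le_power2)
  qed
  have S_cont: "continuous_on {-2..-1} S"
    unfolding S_def by (intro continuous_intros continuous_on_compose2[OF continuous_on_bump[of UNIV]]) auto
  obtain t0 where t0: "t0 \<in> {-2..-1}" "\<And>t. t \<in> {-2..-1} \<Longrightarrow> S t0 \<le> S t"
    using continuous_attains_inf[OF compact_Icc _ S_cont] by fastforce
  have deriv_cont: "continuous_on {-2..-1} (\<lambda>t. (bump_deriv t)\<^sup>2)"
    by (intro continuous_intros continuous_on_bump_deriv)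
  obtain t1 where t1: "\<And>t. t \<in> {-2..-1} \<Longrightarrow> (bump_deriv t)\<^sup>2 \<le> (bump_deriv t1)\<^sup>2"
    using continuous_attains_sup[OF compact_Icc _ deriv_cont] by fastforce
  define C where "C = (bump_deriv t1)\<^sup>2 / S t0"
  have "S t0 > 0" using S_pos t0 by auto
  then have "C \<ge> 0" unfolding C_def by auto
  moreover have "(bump_deriv t)\<^sup>2 \<le> C * S t" for t
  proof (cases "t \<in> {-2..-1}")
    case True
    have "(bump_deriv t)\<^sup>2 \<le> (bump_deriv t1)\<^sup>2" using t1 True by auto
    also have "\<dots> = C * S t0" unfolding C_def using \<open>S t0 > 0\<close> by simp
    also have "\<dots> \<le> C * S t" using t0 True \<open>C \<ge> 0\<close> by (intro mult_left_mono) auto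
    finally show ?thesis .
  next
    case False
    then show ?thesis using bump_deriv_eq_0[of t] \<open>C \<ge> 0\<close> S_nonneg[of t] by auto
  qed
  ultimately show ?thesis using that unfolding S_def by blast
qed

lemma log_radial_profile:
  fixes f :: "real \<Rightarrow> real"
  assumes "continuous_on UNIV f" and vanish: "\<And>s. s < \<alpha> \<or> s > \<beta> \<Longrightarrow> f s = 0"
  shows "continuous_on UNIV (\<lambda>x::'a::euclidean_space. f (ln (norm x)) / norm x ^ DIM('a))"
    and "\<And>x::'a. norm x > exp \<beta> \<Longrightarrow> f (ln (norm x)) / norm x ^ DIM('a) = 0"
    and "integrable lborel (\<lambda>x::'a. f (ln (norm x)) / norm x ^ DIM('a))"
proof -
  have "continuous_on (-{0}) (\<lambda>x::'a. f (ln (norm x)))"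
    by (rule continuous_on_compose2[OF assms(1)]) (auto intro!: continuous_intros)
  then have cont_off_0: "continuous_on (-{0}) (\<lambda>x::'a. f (ln (norm x)) / norm x ^ DIM('a))"
    by (intro continuous_intros) auto
  have off: "f (ln (norm x)) / norm x ^ DIM('a) = 0" if "norm x < exp \<alpha> \<or> norm x > exp \<beta>" for x :: 'a
  proof (cases "x = 0")
    case False
    then have "ln (norm x) < \<alpha> \<or> ln (norm x) > \<beta>"
      using that by (metis exp_less_cancel_iff exp_ln zero_less_norm_iff)
    then show ?thesis using vanish by simp
  qed simp
  show cont: "continuous_on UNIV (\<lambda>x::'a. f (ln (norm x)) / norm x ^ DIM('a))"
    using continuous_on_UNIV_vanishing_near_0[OF exp_gt_zero cont_off_0] off by blast
  show outside: "\<And>x::'a. norm x > exp \<beta> \<Longrightarrow> f (ln (norm x)) / norm x ^ DIM('a) = 0"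
    using off by blast
  show "integrable lborel (\<lambda>x::'a. f (ln (norm x)) / norm x ^ DIM('a))"
    by (rule integrable_continuous_vanishing_outside_ball[OF cont outside])
qed

text \<open>The measure \<open>|x|^-N dx\<close> is invariant under dilations, i.e. under translations of \<open>ln |x|\<close>.\<close>

lemma integral_log_radial_shift:
  fixes f :: "real \<Rightarrow> real"
  assumes "continuous_on UNIV f" and "\<And>s. s < \<alpha> \<or> s > \<beta> \<Longrightarrow> f s = 0"
  shows "(\<integral>x. f (ln (norm (x::'a::euclidean_space)) + c) / norm x ^ DIM('a) \<partial>lborel)
       = (\<integral>x. f (ln (norm (x::'a))) / norm x ^ DIM('a) \<partial>lborel)"
proof -
  define g where "g x = f (ln (norm x)) / norm x ^ DIM('a)" for x :: 'a
  define h where "h x = f (ln (norm x) + c) / norm x ^ DIM('a)" for x :: 'a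
  have shifted_cont: "continuous_on UNIV (\<lambda>s. f (s + c))"
    by (intro continuous_on_compose2[OF assms(1)] continuous_intros) auto
  have shifted_vanish: "f (s + c) = 0" if "s < \<alpha> - c \<or> s > \<beta> - c" for s
    using assms(2) that by auto
  have h_cont: "continuous_on UNIV h" and h_out: "\<And>x. norm x > exp (\<beta> - c) \<Longrightarrow> h x = 0"
    using log_radial_profile[where \<alpha>="\<alpha> - c" and \<beta>="\<beta> - c", OF shifted_cont shifted_vanish] unfolding h_def[abs_def] by auto
  have g_cont: "continuous_on UNIV g" and g_out: "\<And>x. norm x > exp \<beta> \<Longrightarrow> g x = 0"
    using log_radial_profile[where \<alpha>=\<alpha> and \<beta>=\<beta>, OF assms] unfolding g_def[abs_def] by auto
  have "g (exp c *\<^sub>R x) = h x / exp c ^ DIM('a)" for x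
    by (cases "x = 0") (simp_all add: g_def h_def ln_mult power_mult_distrib zero_power algebra_simps)
  moreover have "integral UNIV (\<lambda>x. g (exp c *\<^sub>R x)) = integral UNIV g / exp c ^ DIM('a)"
    by (rule integral_UNIV_dilation[OF g_cont g_out exp_gt_zero])
  ultimately have "integral UNIV h = integral UNIV g" by simp
  then show ?thesis
    using integral_UNIV_vanishing_outside_ball[OF g_cont g_out]
      integral_UNIV_vanishing_outside_ball[OF h_cont h_out]
    unfolding g_def h_def by simp
qed

definition bump_profile :: "real \<Rightarrow> real \<Rightarrow> 'a::euclidean_space \<Rightarrow> real" where
  "bump_profile L d x = (bump (ln (norm x) / L + d))\<^sup>2 / norm x ^ DIM('a)"

lemma bump_profile_nonneg: "bump_profile L d x \<ge> 0"
  by (simp add: bump_profile_def)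

lemma bump_profile_integrable:
  assumes "L > 0"
  shows "continuous_on UNIV (bump_profile L d :: 'a::euclidean_space \<Rightarrow> real)"
    and "integrable lborel (bump_profile L d :: 'a \<Rightarrow> real)"
proof -
  have "continuous_on UNIV (\<lambda>s. (bump (s / L + d))\<^sup>2)"
    using assms by (intro continuous_intros continuous_on_compose2[OF continuous_on_bump[of UNIV]]) auto
  moreover have "(bump (s / L + d))\<^sup>2 = 0" if "s < L * (-2 - d) \<or> s > L * (-1 - d)" for s
    using that assms bump_eq_0[of "s / L + d"] by (auto simp: field_simps)
  ultimately have "continuous_on UNIV (\<lambda>x::'a. (bump (ln (norm x) / L + d))\<^sup>2 / norm x ^ DIM('a))"
    "integrable lborel (\<lambda>x::'a. (bump (ln (norm x) / L + d))\<^sup>2 / norm x ^ DIM('a))"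
    using log_radial_profile[where 'a='a and f="\<lambda>s. (bump (s / L + d))\<^sup>2"
        and \<alpha>="L * (-2 - d)" and \<beta>="L * (-1 - d)"] by blast+
  then show "continuous_on UNIV (bump_profile L d :: 'a \<Rightarrow> real)"
    and "integrable lborel (bump_profile L d :: 'a \<Rightarrow> real)"
    unfolding bump_profile_def[abs_def] by blast+
qed

lemma integral_bump_profile_shift:
  assumes "L > 0"
  shows "(\<integral>x. bump_profile L d (x::'a::euclidean_space) \<partial>lborel) = (\<integral>x. bump_profile L 0 (x::'a) \<partial>lborel)"
proof -
  have cont: "continuous_on UNIV (\<lambda>s. (bump (s / L))\<^sup>2)"
    using assms by (intro continuous_intros continuous_on_compose2[OF continuous_on_bump[of UNIV]]) auto
  have vanish: "(bump (s / L))\<^sup>2 = 0" if "s < -2 * L \<or> s > -L" for s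
    using that assms bump_eq_0[of "s / L"] by (auto simp: field_simps)
  have "(\<integral>x. (bump ((ln (norm (x::'a)) + L * d) / L))\<^sup>2 / norm x ^ DIM('a) \<partial>lborel)
      = (\<integral>x. (bump (ln (norm (x::'a)) / L))\<^sup>2 / norm x ^ DIM('a) \<partial>lborel)"
    by (rule integral_log_radial_shift[where f="\<lambda>s. (bump (s / L))\<^sup>2", OF cont vanish, simplified])
  moreover have "(ln (norm x) + L * d) / L = ln (norm x) / L + d" for x :: 'a
    using assms by (simp add: add_divide_distrib)
  ultimately show ?thesis unfolding bump_profile_def by simp
qed

lemma integral_bump_profile_pos:
  assumes "L > 0"
  shows "(\<integral>x. bump_profile L 0 (x::'a::euclidean_space) \<partial>lborel) > 0"
proof -
  obtain b :: 'a where "b \<in> Basis" using nonempty_Basis by blast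
  define x0 where "x0 = exp (-3/2 * L) *\<^sub>R b"
  have "norm x0 = exp (-3/2 * L)" unfolding x0_def using \<open>b \<in> Basis\<close> by simp
  moreover have "bump (-3/2) > 0" by (rule bump_pos) auto
  ultimately have "bump_profile L 0 x0 > 0"
    unfolding bump_profile_def using assms by simp
  then show ?thesis
    using integral_pos_if_continuous_pos bump_profile_integrable[OF assms] bump_profile_nonneg by blast
qed

lemma power2_diff_le_weighted:
  fixes X Y e :: real
  assumes "e > 0"
  shows "(X - Y)\<^sup>2 \<le> (1 + e) * Y\<^sup>2 + (1 + 1/e) * X\<^sup>2"
proof -
  have "0 \<le> (sqrt e * Y + X / sqrt e)\<^sup>2" by simp
  also have "\<dots> = e * Y\<^sup>2 + 2 * X * Y + X\<^sup>2 / e"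
    using assms by (simp add: power2_eq_square field_simps)
  finally show ?thesis by (simp add: power2_eq_square field_simps)
qed

lemma powr_hardy_exponent_square:
  fixes r :: real and n :: nat
  assumes "r > 0"
  defines "a \<equiv> (real n - 2) / 2"
  shows "(r powr (-a - 1))\<^sup>2 = 1 / r ^ n" "(r powr (-a))\<^sup>2 / r\<^sup>2 = 1 / r ^ n"
proof -
  have "(r powr (-a - 1))\<^sup>2 = r powr (- real n)"
    by (simp add: power2_eq_square powr_add[symmetric] a_def)
  also have "\<dots> = 1 / r ^ n"
    using assms by (simp add: powr_minus_divide powr_realpow)
  finally show "(r powr (-a - 1))\<^sup>2 = 1 / r ^ n" .
  moreover have "r powr (-a) = r powr (-a - 1) * r"
    using powr_add[of r "-a - 1" 1] assms by simp
  then have "(r powr (-a))\<^sup>2 / r\<^sup>2 = (r powr (-a - 1))\<^sup>2"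
    using assms by (simp add: power_mult_distrib)
  ultimately show "(r powr (-a))\<^sup>2 / r\<^sup>2 = 1 / r ^ n" by simp
qed

lemma ln_div_between_iff:
  fixes L r :: real
  assumes "L > 0" "r > 0"
  shows "(-2 < ln r / L \<and> ln r / L < -1) \<longleftrightarrow> (exp (-2*L) < r \<and> r < exp (-L))"
proof -
  have "(-2 < ln r / L \<and> ln r / L < -1) \<longleftrightarrow> (-2*L < ln r \<and> ln r < -L)"
    using assms(1) by (auto simp: field_simps)
  also have "\<dots> \<longleftrightarrow> (exp (-2*L) < r \<and> r < exp (-L))"
    using assms(2) by (metis exp_less_cancel_iff exp_ln)
  finally show ?thesis .
qed

text \<open>\<open>|x|^-(N-2)/2\<close>, the formal extremal of the Euclidean Hardy inequality, cut off on the
  logarithmic scale \<open>L\<close> to the annulus \<open>exp(-2L) < |x| < exp(-L)\<close>.\<close>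

definition trial_fn :: "real \<Rightarrow> 'a::euclidean_space \<Rightarrow> real" where
  "trial_fn L x = norm x powr (- (real DIM('a) - 2) / 2) * bump (ln (norm x) / L)"

lemma trial_fn_eq_0:
  assumes "L > 0" "\<not> (exp (-2*L) < norm x \<and> norm x < exp (-L))"
  shows "trial_fn L x = 0"
proof (cases "x = 0")
  case False
  then have "\<not> (-2 < ln (norm x) / L \<and> ln (norm x) / L < -1)"
    using assms ln_div_between_iff[OF assms(1), of "norm x"] by simp
  then show ?thesis by (simp add: trial_fn_def bump_eq_0)
qed (simp add: trial_fn_def)

lemma test_fn_trial_fn:
  assumes "L > 0"
  shows "test_fn (trial_fn L :: 'a::euclidean_space \<Rightarrow> real)"
proof -
  let ?a = "(real DIM('a) - 2) / 2"
  have elementary_form: "trial_fn L = (\<lambda>x::'a. norm x powr (- ?a)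
      * (flat_exp 0 (2 + (1/L) * ln (norm x)) * flat_exp 0 (-1 + (-(1/L)) * ln (norm x))))"
  proof
    fix x :: 'a
    have "2 + ln (norm x) / L = 2 + (1/L) * ln (norm x)"
      "-1 - ln (norm x) / L = -1 + (-(1/L)) * ln (norm x)"
      by simp_all
    then show "trial_fn L x = norm x powr (- ?a)
      * (flat_exp 0 (2 + (1/L) * ln (norm x)) * flat_exp 0 (-1 + (-(1/L)) * ln (norm x)))"
      unfolding trial_fn_def bump_def by (simp only: minus_divide_left)
  qed
  have "elementary_fn (trial_fn L :: 'a \<Rightarrow> real)"
    unfolding elementary_form by (intro elementary_fn.intros)
  then have "smooth_on (-{0}) (trial_fn L :: 'a \<Rightarrow> real)"
    by (rule elementary_fn_smooth)
  let ?annulus = "{x::'a. exp (-2*L) \<le> norm x \<and> norm x \<le> exp (-L)}"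
  have support: "{x::'a. trial_fn L x \<noteq> 0} \<subseteq> ?annulus"
    using trial_fn_eq_0[OF assms] by (force simp: less_imp_le)
  have "closed ?annulus"
    by (intro closed_Collect_conj closed_Collect_le continuous_intros)
  with support have "closure {x::'a. trial_fn L x \<noteq> 0} \<subseteq> ?annulus"
    by (rule closure_minimal)
  moreover have "bounded ?annulus"
    by (rule bounded_subset[of "cball 0 (exp (-L))"]) auto
  then have "bounded {x::'a. trial_fn L x \<noteq> 0}"
    using support by (rule bounded_subset)
  ultimately show ?thesis
    unfolding test_fn_def using \<open>smooth_on (-{0}) (trial_fn L)\<close>
    by (auto simp: compact_closure)
qed

lemma radial_deriv_trial_fn:
  fixes x :: "'a::euclidean_space"
  assumes "L > 0" "x \<noteq> 0"
  defines "a \<equiv> (real DIM('a) - 2) / 2" and "s \<equiv> ln (norm x) / L"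
  shows "radial_deriv (trial_fn L) x = norm x powr (-a - 1) * (bump_deriv s / L - a * bump s)"
proof -
  define D where "D = norm x powr (-a - 1) * (bump_deriv s / L - a * bump s)"
  have "norm x > 0" using assms(2) by simp
  have "((\<lambda>r. ln r / L) has_real_derivative inverse (norm x) / L) (at (norm x))"
    using \<open>norm x > 0\<close> by (auto intro!: derivative_eq_intros simp: divide_inverse)
  from DERIV_chain2[OF bump_has_real_derivative this]
  have bump_log: "((\<lambda>r. bump (ln r / L)) has_real_derivative bump_deriv s * (inverse (norm x) / L))
      (at (norm x))"
    unfolding s_def .
  have power: "((\<lambda>r. r powr (-a)) has_real_derivative (-a) * norm x powr (-a - 1)) (at (norm x))"
    using has_real_derivative_powr[OF \<open>norm x > 0\<close>, of "-a"] by simp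
  have "norm x powr (-a) = norm x * norm x powr (-a - 1)"
    using powr_add[of "norm x" "-a - 1" 1] \<open>norm x > 0\<close> by simp
  then have "(-a) * norm x powr (-a - 1) * bump (ln (norm x) / L)
      + bump_deriv s * (inverse (norm x) / L) * norm x powr (-a) = D"
    unfolding D_def s_def using \<open>norm x > 0\<close> by (simp add: field_simps)
  with DERIV_mult[OF power bump_log]
  have "((\<lambda>r. r powr (-a) * bump (ln r / L)) has_real_derivative D) (at (norm x))"
    by simp
  from has_derivative_compose[OF has_derivative_norm[OF assms(2)] this[unfolded has_field_derivative_def]]
  have "(trial_fn L has_derivative (\<lambda>h. D * (h \<bullet> sgn x))) (at x)"
    by (simp add: trial_fn_def[abs_def] a_def minus_divide_left)
  then have "frechet_derivative (trial_fn L) (at x) = (\<lambda>h. D * (h \<bullet> sgn x))"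
    by (rule frechet_derivative_at[symmetric])
  moreover have "(x /\<^sub>R norm x) \<bullet> sgn x = 1"
    using assms(2) by (simp add: sgn_div_norm dot_square_norm power2_eq_square)
  ultimately show ?thesis unfolding radial_deriv_def D_def by simp
qed

lemma trial_fn_square_div_norm_square:
  "(trial_fn L x)\<^sup>2 / (norm x)\<^sup>2 = bump_profile L 0 (x::'a::euclidean_space)"
proof (cases "x = 0")
  case False
  let ?p = "norm x powr (- ((real DIM('a) - 2) / 2))"
  have "(trial_fn L x)\<^sup>2 / (norm x)\<^sup>2 = ?p\<^sup>2 / (norm x)\<^sup>2 * (bump (ln (norm x) / L))\<^sup>2"
    by (simp add: trial_fn_def power_mult_distrib minus_divide_left)
  also have "\<dots> = bump_profile L 0 x"
    using powr_hardy_exponent_square(2)[of "norm x" "DIM('a)"] False by (simp add: bump_profile_def)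
  finally show ?thesis .
qed (simp add: trial_fn_def bump_profile_def)

lemma bump_combination_square_le:
  assumes "e > 0" "L > 0"
    and "\<And>t. (bump_deriv t)\<^sup>2 \<le> C * ((bump (t + 1/3))\<^sup>2 + (bump t)\<^sup>2 + (bump (t - 1/3))\<^sup>2)"
  shows "(bump_deriv s / L - a * bump s)\<^sup>2 \<le> (1 + e) * a\<^sup>2 * (bump s)\<^sup>2
    + (1 + 1/e) * C / L\<^sup>2 * ((bump (s + 1/3))\<^sup>2 + (bump s)\<^sup>2 + (bump (s - 1/3))\<^sup>2)"
proof -
  define B where "B = (bump (s + 1/3))\<^sup>2 + (bump s)\<^sup>2 + (bump (s - 1/3))\<^sup>2"
  have "(bump_deriv s / L)\<^sup>2 \<le> C * B / L\<^sup>2"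
    using assms(3)[of s] assms(2) unfolding B_def by (simp add: power_divide divide_right_mono)
  then have "(1 + 1/e) * (bump_deriv s / L)\<^sup>2 \<le> (1 + 1/e) * (C * B / L\<^sup>2)"
    using assms(1) by (intro mult_left_mono) auto
  then show ?thesis
    using power2_diff_le_weighted[OF assms(1), of "bump_deriv s / L" "a * bump s"]
    unfolding B_def[symmetric] by (simp add: power_mult_distrib)
qed

lemma trial_energy_density_le:
  fixes x :: "'a::euclidean_space"
  assumes "m \<ge> 1" "L > 0" "e > 0" "C \<ge> 0"
    and bound: "\<And>t. (bump_deriv t)\<^sup>2 \<le> C * ((bump (t + 1/3))\<^sup>2 + (bump t)\<^sup>2 + (bump (t - 1/3))\<^sup>2)"
  defines "a \<equiv> (real DIM('a) - 2) / 2" and "K \<equiv> exp ((real DIM('a) - 1) * exp (-L))"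
  shows "(radial_deriv (trial_fn L) x)\<^sup>2 * vol_density m x
    \<le> K * ((1 + e) * a\<^sup>2 * bump_profile L 0 x
      + (1 + 1/e) * C / L\<^sup>2 * (bump_profile L (1/3) x + bump_profile L 0 x + bump_profile L (-1/3) x))"
    (is "_ \<le> ?bound")
proof -
  define s where "s = ln (norm x) / L"
  have "?bound \<ge> 0"
    using assms(3,4) bump_profile_nonneg
    by (intro mult_nonneg_nonneg add_nonneg_nonneg divide_nonneg_nonneg) (auto simp: K_def)
  have "radial_deriv (trial_fn L) x = 0" if "\<not> (x \<noteq> 0 \<and> -2 < s \<and> s < -1)"
  proof (cases "x = 0")
    case True
    then show ?thesis using radial_deriv_at_0[OF test_fn_trial_fn[OF assms(2)]] by simp
  next
    case False
    then have "\<not> (-2 < s \<and> s < -1)" using that by simp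
    then show ?thesis
      using radial_deriv_trial_fn[OF assms(2) False] bump_eq_0 bump_deriv_eq_0 unfolding s_def by simp
  qed
  then consider (outside) "radial_deriv (trial_fn L) x = 0" | (inside) "x \<noteq> 0" "-2 < s \<and> s < -1"
    by blast
  then show ?thesis
  proof cases
    case outside
    then show ?thesis using \<open>?bound \<ge> 0\<close> by simp
  next
    case inside
    define r where "r = norm x"
    have "r > 0" using inside(1) r_def by simp
    define Q where "Q = bump_deriv s / L - a * bump s"
    have deriv_square: "(radial_deriv (trial_fn L) x)\<^sup>2 = Q\<^sup>2 / r ^ DIM('a)"
      using radial_deriv_trial_fn[OF assms(2) inside(1)] powr_hardy_exponent_square(1)[OF \<open>r > 0\<close>]
      unfolding Q_def s_def r_def a_def by (simp add: power_mult_distrib)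
    have "r < exp (-L)"
      using inside(2) ln_div_between_iff[OF assms(2) \<open>r > 0\<close>] unfolding s_def r_def by simp
    then have "vol_density m x \<le> K"
      unfolding K_def r_def using vol_density_le[OF inside(1) _ _ assms(1)] assms(2) by simp
    define B where "B = (bump (s + 1/3))\<^sup>2 + (bump s)\<^sup>2 + (bump (s - 1/3))\<^sup>2"
    have "Q\<^sup>2 \<le> (1 + e) * a\<^sup>2 * (bump s)\<^sup>2 + (1 + 1/e) * C / L\<^sup>2 * B"
      unfolding Q_def B_def by (rule bump_combination_square_le[OF assms(3,2) bound])
    then have "Q\<^sup>2 / r ^ DIM('a) * K
        \<le> ((1 + e) * a\<^sup>2 * (bump s)\<^sup>2 + (1 + 1/e) * C / L\<^sup>2 * B) / r ^ DIM('a) * K"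
      using \<open>r > 0\<close> by (intro mult_right_mono divide_right_mono) (auto simp: K_def)
    also have "\<dots> = ?bound"
      unfolding bump_profile_def B_def s_def r_def by (simp add: add_divide_distrib algebra_simps)
    finally have "Q\<^sup>2 / r ^ DIM('a) * K \<le> ?bound" .
    moreover have "(radial_deriv (trial_fn L) x)\<^sup>2 * vol_density m x \<le> Q\<^sup>2 / r ^ DIM('a) * K"
      unfolding deriv_square using \<open>vol_density m x \<le> K\<close> \<open>r > 0\<close>
      by (intro mult_left_mono) auto
    ultimately show ?thesis by linarith
  qed
qed

lemma trial_energy_le:
  assumes "m \<ge> 1" "L > 0" "e > 0" "C \<ge> 0"
    and "\<And>t. (bump_deriv t)\<^sup>2 \<le> C * ((bump (t + 1/3))\<^sup>2 + (bump t)\<^sup>2 + (bump (t - 1/3))\<^sup>2)"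
  defines "a \<equiv> (real DIM('a) - 2) / 2" and "K \<equiv> exp ((real DIM('a) - 1) * exp (-L))"
  shows "model_integral m (\<lambda>x. (radial_deriv (trial_fn L :: 'a::euclidean_space \<Rightarrow> real) x)\<^sup>2)
    \<le> K * ((1 + e) * a\<^sup>2 + 3 * (1 + 1/e) * C / L\<^sup>2) * (\<integral>x. bump_profile L 0 (x::'a) \<partial>lborel)"
proof -
  let ?u = "trial_fn L :: 'a \<Rightarrow> real"
  let ?A = "\<integral>x. bump_profile L 0 (x::'a) \<partial>lborel"
  obtain r0 R where "0 < r0"
    and deriv_vanish: "\<And>x. norm x < r0 \<or> norm x > R \<Longrightarrow> frechet_derivative ?u (at x) = (\<lambda>_. 0)"
    using test_fnE[OF test_fn_trial_fn[OF assms(2)]] by metis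
  have "radial_deriv ?u x = 0" if "norm x < r0 \<or> norm x > R" for x
    using deriv_vanish[OF that] by (simp add: radial_deriv_def)
  then have energy_integrable: "integrable lborel (\<lambda>x. (radial_deriv ?u x)\<^sup>2 * vol_density m x)"
    by (intro integrable_vanishing_off_annulus[OF \<open>0 < r0\<close>, where R=R]) (auto intro!: continuous_intros
        continuous_on_vol_density continuous_on_radial_deriv test_fn_trial_fn assms(2))
  define P where "P d = (bump_profile L d :: 'a \<Rightarrow> real)" for d
  have "integrable lborel (P d)" for d
    using bump_profile_integrable[OF assms(2)] unfolding P_def by blast
  then have bound_integrable: "integrable lborel
      (\<lambda>x. K * ((1 + e) * a\<^sup>2 * P 0 x + (1 + 1/e) * C / L\<^sup>2 * (P (1/3) x + P 0 x + P (-1/3) x)))"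
    by (intro Bochner_Integration.integrable_mult_right Bochner_Integration.integrable_add)
  have "model_integral m (\<lambda>x. (radial_deriv ?u x)\<^sup>2)
      \<le> (\<integral>x. K * ((1 + e) * a\<^sup>2 * P 0 x + (1 + 1/e) * C / L\<^sup>2 * (P (1/3) x + P 0 x + P (-1/3) x))
        \<partial>lborel)"
    unfolding model_integral_def P_def a_def K_def
    by (rule integral_mono[OF energy_integrable bound_integrable[unfolded P_def a_def K_def]
          trial_energy_density_le[OF assms(1-5)]])
  also have "\<dots> = K * ((1 + e) * a\<^sup>2 * ?A + (1 + 1/e) * C / L\<^sup>2 * (?A + ?A + ?A))"
    using \<open>\<And>d. integrable lborel (P d)\<close> integral_bump_profile_shift[OF assms(2), where 'a='a and d="1/3"]
      integral_bump_profile_shift[OF assms(2), where 'a='a and d="-1/3"]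
    unfolding P_def by simp
  also have "\<dots> = K * ((1 + e) * a\<^sup>2 + 3 * (1 + 1/e) * C / L\<^sup>2) * ?A"
    by (simp add: algebra_simps)
  finally show ?thesis .
qed

lemma hardy_rhs_ge_euclidean:
  fixes u :: "'a::euclidean_space \<Rightarrow> real"
  assumes "m \<ge> 1" "test_fn u" "c \<ge> 0"
  shows "c * (\<integral>x. (u x)\<^sup>2 / (norm x)\<^sup>2 \<partial>lborel) \<le> hardy_rhs m c u"
proof -
  obtain r0 R where "0 < r0" and vanish: "\<And>x. norm x < r0 \<or> norm x > R \<Longrightarrow> u x = 0"
    and "\<And>x. (u has_derivative frechet_derivative u (at x)) (at x)"
    using test_fnE[OF assms(2)] by metis
  then have "continuous_on (-{0}) u"
    by (meson continuous_at_imp_continuous_on has_derivative_continuous)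
  have "integrable lborel (\<lambda>x. (u x)\<^sup>2 / (norm x)\<^sup>2)"
    "integrable lborel (\<lambda>x. (u x)\<^sup>2 / (norm x)\<^sup>2 * vol_density m x)"
    by (rule integrable_vanishing_off_annulus[OF \<open>0 < r0\<close>, where R=R];
        auto intro!: continuous_intros \<open>continuous_on (-{0}) u\<close> continuous_on_vol_density simp: vanish)+
  moreover have "(u x)\<^sup>2 / (norm x)\<^sup>2 \<le> (u x)\<^sup>2 / (norm x)\<^sup>2 * vol_density m x" for x
  proof (cases "x = 0")
    case False
    have "(u x)\<^sup>2 / (norm x)\<^sup>2 \<ge> 0" by simp
    with vol_density_ge_1[OF False, of m] show ?thesis
      by (metis mult_left_mono mult.right_neutral)
  qed (use vanish \<open>0 < r0\<close> in simp)
  ultimately have "(\<integral>x. (u x)\<^sup>2 / (norm x)\<^sup>2 \<partial>lborel) \<le> model_integral m (\<lambda>x. (u x)\<^sup>2 / (norm x)\<^sup>2)"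
    unfolding model_integral_def by (rule integral_mono)
  then have "c * (\<integral>x. (u x)\<^sup>2 / (norm x)\<^sup>2 \<partial>lborel) \<le> c * model_integral m (\<lambda>x. (u x)\<^sup>2 / (norm x)\<^sup>2)"
    using assms(3) by (rule mult_left_mono)
  moreover have weighted_nonneg: "model_integral m (\<lambda>x. norm x ^ k * (u x)\<^sup>2) \<ge> 0" for k
    unfolding model_integral_def
    by (rule Bochner_Integration.integral_nonneg) (simp add: vol_density_nonneg)
  then have "(real m)\<^sup>2 * (real DIM('a) - 1)\<^sup>2 * model_integral m (\<lambda>x. norm x ^ (4*m - 2) * (u x)\<^sup>2) \<ge> 0"
    by (intro mult_nonneg_nonneg) auto
  moreover have "real m * (real DIM('a) - 1) * (real DIM('a) - 2 + 2 * real m)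
      * model_integral m (\<lambda>x. norm x ^ (2*m - 2) * (u x)\<^sup>2) \<ge> 0"
    using assms(1) DIM_positive[where 'a='a] weighted_nonneg
    by (intro mult_nonneg_nonneg) (auto simp: Suc_le_eq)
  ultimately show ?thesis
    unfolding hardy_rhs_def by linarith
qed

theorem hardy_constant_sharp:
  assumes "m \<ge> 1" "c > (real DIM('a) - 2)\<^sup>2 / 4"
  shows "\<exists>u::'a::euclidean_space \<Rightarrow> real.
    test_fn u \<and> model_integral m (\<lambda>x. (radial_deriv u x)\<^sup>2) < hardy_rhs m c u"
proof -
  define a where "a = (real DIM('a) - 2) / 2"
  have "a\<^sup>2 < c" using assms(2) unfolding a_def by (simp add: power_divide)
  obtain C where "C \<ge> 0" and C: "\<And>t. (bump_deriv t)\<^sup>2 \<le> C * ((bump (t + 1/3))\<^sup>2 + (bump t)\<^sup>2 + (bump (t - 1/3))\<^sup>2)"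
    using bump_deriv_square_le by blast
  define e where "e = (c - a\<^sup>2) / (2 * a\<^sup>2 + 1)"
  have "2 * a\<^sup>2 + 1 > 0" by (simp add: add_nonneg_pos)
  have "e > 0" unfolding e_def using \<open>a\<^sup>2 < c\<close> \<open>2 * a\<^sup>2 + 1 > 0\<close> by simp
  have "(1 + e) * a\<^sup>2 < c"
  proof -
    have "e * a\<^sup>2 = (c - a\<^sup>2) * (a\<^sup>2 / (2 * a\<^sup>2 + 1))" unfolding e_def by (simp add: field_simps)
    also have "\<dots> < (c - a\<^sup>2) * 1"
      using \<open>a\<^sup>2 < c\<close> \<open>2 * a\<^sup>2 + 1 > 0\<close> by (intro mult_strict_left_mono) (auto simp: field_simps)
    finally show ?thesis by (simp add: algebra_simps)
  qed
  define K where "K L = exp ((real DIM('a) - 1) * exp (-L))" for L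
  have "((\<lambda>L. K L * ((1 + e) * a\<^sup>2 + 3 * (1 + 1/e) * C / L\<^sup>2)) \<longlongrightarrow> (1 + e) * a\<^sup>2) at_top"
    unfolding K_def by real_asymp
  from order_tendstoD(2)[OF this \<open>(1 + e) * a\<^sup>2 < c\<close>] eventually_gt_at_top[of 0]
  obtain L where "L > 0" and small: "K L * ((1 + e) * a\<^sup>2 + 3 * (1 + 1/e) * C / L\<^sup>2) < c"
    by (metis (mono_tags, lifting) eventually_at_top_linorder order_refl eventually_conj)
  let ?u = "trial_fn L :: 'a \<Rightarrow> real"
  let ?A = "\<integral>x. bump_profile L 0 (x::'a) \<partial>lborel"
  have "model_integral m (\<lambda>x. (radial_deriv ?u x)\<^sup>2) \<le> K L * ((1 + e) * a\<^sup>2 + 3 * (1 + 1/e) * C / L\<^sup>2) * ?A"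
    unfolding K_def a_def using trial_energy_le[OF assms(1) \<open>L > 0\<close> \<open>e > 0\<close> \<open>C \<ge> 0\<close> C] .
  also have "\<dots> < c * ?A"
    using small integral_bump_profile_pos[OF \<open>L > 0\<close>] by (rule mult_strict_right_mono)
  also have "\<dots> \<le> hardy_rhs m c ?u"
    using hardy_rhs_ge_euclidean[OF assms(1) test_fn_trial_fn[OF \<open>L > 0\<close>], of c]
      \<open>a\<^sup>2 < c\<close> zero_le_power2[of a]
    by (simp add: trial_fn_square_div_norm_square)
  finally show ?thesis using test_fn_trial_fn[OF \<open>L > 0\<close>] by blast
qed

theorem corollary3p3:
  fixes m :: nat
  assumes "DIM('a::euclidean_space) \<ge> 3" and "m \<ge> 1"
  shows "(\<forall>u::'a \<Rightarrow> real. test_fn u \<longrightarrow>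
            model_integral m (\<lambda>x. (radial_deriv u x)\<^sup>2)
              \<ge> hardy_rhs m ((real DIM('a) - 2)\<^sup>2 / 4) u)
       \<and> (\<forall>c > (real DIM('a) - 2)\<^sup>2 / 4. \<exists>u::'a \<Rightarrow> real. test_fn u \<and>
            model_integral m (\<lambda>x. (radial_deriv u x)\<^sup>2) < hardy_rhs m c u)"
  using hardy_inequality[OF assms(2)] hardy_constant_sharp[OF assms(2)] by blast

end
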